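(* Let $1\le m<n$ and let $v_1\ge v_2\ge\cdots\ge v_n$ be reals with $v_m>0$. Let $k=\max\{i:v_i>v_m/2\}$ (so $k\ge m$). For $i\in[n]$ define $B_i=\sum_{j=1}^k\frac{m}{j(j+1)}\log_2^\dagger(v_i/v_j)$. Then $\sum_{i=m}^kB_i\le m$.
   Context: $\log_2^\dagger(\alpha)=\max(0,\min(1,\log_2\alpha))$ for $\alpha\ge 0$. *)

theory Defs
  imports Complex_Main
begin

definition log2dagger :: "real \<Rightarrow> real" where
  "log2dagger \<alpha> = max 0 (min 1 (log 2 \<alpha>))"

end

theory Submission
  imports Defs
begin

text \<open>
  Within the window \<open>v\<^sub>k > v\<^sub>m / 2\<close> every ratio \<open>v\<^sub>i / v\<^sub>j\<close> with \<open>i \<ge> m\<close> is below 2, so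
  \<open>log\<^sub>2\<^sup>\<dagger>(v\<^sub>i / v\<^sub>j) = max 0 (a\<^sub>i - a\<^sub>j)\<close> for the non-increasing sequence \<open>a = log\<^sub>2 \<circ> v\<close>.
  For such sequences the weighted gap sum, plus a tail term \<open>(\<Sum>\<^sub>i a\<^sub>i - a\<^sub>K) / (K + 1)\<close>,
  is bounded by \<open>a\<^sub>m - a\<^sub>K\<close>; this follows by induction on \<open>K\<close>, the weights telescoping
  via \<open>1 / (x (x + 1)) + 1 / (x + 1) = 1 / x\<close>. Finally \<open>a\<^sub>m - a\<^sub>k < 1\<close>.
\<close>

lemma log2dagger_eq_max_log_diff:
  fixes x y :: real
  assumes "0 < x" "0 < y" "x < 2 * y"
  shows "log2dagger (x / y) = max 0 (log 2 x - log 2 y)"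
proof -
  have "log 2 (x / y) < 1"
    using assms by (subst log_less_one_cancel_iff) (auto simp: divide_less_eq)
  moreover have "log 2 (x / y) = log 2 x - log 2 y"
    using assms by (simp add: log_divide)
  ultimately show ?thesis
    unfolding log2dagger_def by simp
qed

lemma sum_max_gap_eq_0:
  fixes a w :: "'a \<Rightarrow> real"
  assumes "\<And>j. j \<in> A \<Longrightarrow> x \<le> a j"
  shows "(\<Sum>j\<in>A. max 0 (x - a j) / w j) = 0"
  using assms by (intro sum.neutral) simp

lemma divide_mult_succ_add_divide_succ:
  fixes x c :: real
  assumes "0 < x"
  shows "c / (x * (x + 1)) + c / (x + 1) = c / x"
proof -
  have "0 < x + 1"
    using assms by simp
  then show ?thesis
    using assms by (simp add: divide_simps) (simp add: algebra_simps)
qed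

lemma antitone_weighted_gap_sum_Suc:
  fixes a :: "nat \<Rightarrow> real" and m K :: nat
  assumes "1 \<le> m" and "m \<le> K"
    and antitone: "\<And>i j. 1 \<le> i \<Longrightarrow> i \<le> j \<Longrightarrow> j \<le> Suc K \<Longrightarrow> a j \<le> a i"
  defines "g \<equiv> \<lambda>i j. max 0 (a i - a j) / (real j * (real j + 1))"
  shows "(\<Sum>i=m..Suc K. \<Sum>j=1..Suc K. g i j)
         = (\<Sum>i=m..K. \<Sum>j=1..K. g i j)
           + (\<Sum>i=m..K. a i - a (Suc K)) / ((real K + 1) * (real K + 2))"
proof -
  have new_column: "(\<Sum>j=1..Suc K. g i j)
      = (\<Sum>j=1..K. g i j) + (a i - a (Suc K)) / ((real K + 1) * (real K + 2))"
    if "i \<in> {m..K}" for i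
    using antitone[of i "Suc K"] that \<open>1 \<le> m\<close> by (simp add: g_def add.commute)
  have new_row: "(\<Sum>j=1..Suc K. g (Suc K) j) = 0"
    unfolding g_def using antitone by (intro sum_max_gap_eq_0) simp
  have "(\<Sum>i=m..Suc K. \<Sum>j=1..Suc K. g i j) = (\<Sum>i=m..K. \<Sum>j=1..Suc K. g i j)"
    using \<open>m \<le> K\<close> new_row by simp
  also have "\<dots> = (\<Sum>i=m..K. (\<Sum>j=1..K. g i j) + (a i - a (Suc K)) / ((real K + 1) * (real K + 2)))"
    using new_column by (rule sum.cong[OF refl])
  also have "\<dots> = (\<Sum>i=m..K. \<Sum>j=1..K. g i j)
      + (\<Sum>i=m..K. a i - a (Suc K)) / ((real K + 1) * (real K + 2))"
    by (simp only: sum.distrib sum_divide_distrib)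
  finally show ?thesis .
qed

lemma antitone_weighted_gap_sum_bound:
  fixes a :: "nat \<Rightarrow> real" and m K :: nat
  assumes "1 \<le> m" and "m \<le> K"
    and antitone: "\<And>i j. 1 \<le> i \<Longrightarrow> i \<le> j \<Longrightarrow> j \<le> K \<Longrightarrow> a j \<le> a i"
  shows "(\<Sum>i=m..K. \<Sum>j=1..K. max 0 (a i - a j) / (real j * (real j + 1)))
           + (\<Sum>i=m..K. a i - a K) / (real K + 1)
         \<le> a m - a K"
  using \<open>m \<le> K\<close> antitone
proof (induction K rule: dec_induct)
  case base
  then show ?case
    by (simp add: sum_max_gap_eq_0)
next
  case (step K)
  let ?g = "\<lambda>i j. max 0 (a i - a j) / (real j * (real j + 1))"
  let ?K' = "real K + 1"
  have antitone: "a j \<le> a i" if "1 \<le> i" "i \<le> j" "j \<le> Suc K" for i j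
    using step.prems that by blast
  have IH: "(\<Sum>i=m..K. \<Sum>j=1..K. ?g i j) + (\<Sum>i=m..K. a i - a K) / ?K' \<le> a m - a K"
    using step.IH antitone by simp
  define \<delta> where "\<delta> = a K - a (Suc K)"
  define G where "G = (\<Sum>i=m..K. a i - a (Suc K))"
  have "\<delta> \<ge> 0"
    unfolding \<delta>_def using antitone step.hyps \<open>1 \<le> m\<close> by simp
  have gaps: "(\<Sum>i=m..Suc K. \<Sum>j=1..Suc K. ?g i j) = (\<Sum>i=m..K. \<Sum>j=1..K. ?g i j) + G / (?K' * (?K' + 1))"
    unfolding G_def using \<open>1 \<le> m\<close> step.hyps antitone
    by (subst antitone_weighted_gap_sum_Suc) (simp_all add: add.commute)
  have tail: "(\<Sum>i=m..Suc K. a i - a (Suc K)) = G"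
    using step.hyps by (simp add: G_def)
  have telescope: "G / (?K' * (?K' + 1)) + G / (?K' + 1) = G / ?K'"
    by (rule divide_mult_succ_add_divide_succ) simp
  have "G = (\<Sum>i=m..K. (a i - a K) + \<delta>)"
    unfolding G_def \<delta>_def by simp
  also have "\<dots> = (\<Sum>i=m..K. a i - a K) + real (Suc K - m) * \<delta>"
    by (simp only: sum.distrib sum_constant card_atLeastAtMost)
  finally have G_split: "G = (\<Sum>i=m..K. a i - a K) + real (Suc K - m) * \<delta>" .
  have "real (Suc K - m) \<le> ?K'"
    by simp
  then have "real (Suc K - m) * \<delta> \<le> ?K' * \<delta>"
    using \<open>\<delta> \<ge> 0\<close> by (rule mult_right_mono)
  then have "real (Suc K - m) * \<delta> / ?K' \<le> \<delta>"
    by (simp add: pos_divide_le_eq mult.commute)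
  have "(\<Sum>i=m..Suc K. \<Sum>j=1..Suc K. ?g i j) + (\<Sum>i=m..Suc K. a i - a (Suc K)) / (real (Suc K) + 1)
      = (\<Sum>i=m..K. \<Sum>j=1..K. ?g i j) + (G / (?K' * (?K' + 1)) + G / (?K' + 1))"
    unfolding gaps tail by simp
  also have "\<dots> = (\<Sum>i=m..K. \<Sum>j=1..K. ?g i j) + (\<Sum>i=m..K. a i - a K) / ?K' + real (Suc K - m) * \<delta> / ?K'"
    unfolding telescope by (simp add: G_split add_divide_distrib)
  also have "\<dots> \<le> (a m - a K) + \<delta>"
    using IH \<open>real (Suc K - m) * \<delta> / ?K' \<le> \<delta>\<close> by linarith
  also have "\<dots> = a m - a (Suc K)"
    unfolding \<delta>_def by simp
  finally show ?case .
qed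

lemma antitone_weighted_gap_sum_le:
  fixes a :: "nat \<Rightarrow> real" and m K :: nat
  assumes "1 \<le> m" and "m \<le> K"
    and antitone: "\<And>i j. 1 \<le> i \<Longrightarrow> i \<le> j \<Longrightarrow> j \<le> K \<Longrightarrow> a j \<le> a i"
  shows "(\<Sum>i=m..K. \<Sum>j=1..K. max 0 (a i - a j) / (real j * (real j + 1))) \<le> a m - a K"
proof -
  have "0 \<le> (\<Sum>i=m..K. a i - a K) / (real K + 1)"
    using antitone \<open>1 \<le> m\<close> by (intro divide_nonneg_pos sum_nonneg) auto
  moreover have "(\<Sum>i=m..K. \<Sum>j=1..K. max 0 (a i - a j) / (real j * (real j + 1)))
      + (\<Sum>i=m..K. a i - a K) / (real K + 1) \<le> a m - a K"
    using assms by (rule antitone_weighted_gap_sum_bound)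
  ultimately show ?thesis
    by linarith
qed

lemma weighted_log2dagger_sum_le:
  fixes v :: "nat \<Rightarrow> real" and m k :: nat
  assumes "1 \<le> m" and "m \<le> k"
    and antitone: "\<And>i j. 1 \<le> i \<Longrightarrow> i \<le> j \<Longrightarrow> j \<le> k \<Longrightarrow> v j \<le> v i"
    and "0 < v k" and "v m < 2 * v k"
  shows "(\<Sum>i=m..k. \<Sum>j=1..k. real m / (real j * (real j + 1)) * log2dagger (v i / v j)) \<le> real m"
proof -
  define a where "a = (\<lambda>i. log 2 (v i))"
  have pos: "0 < v j" if "1 \<le> j" "j \<le> k" for j
    using antitone[OF that order.refl] \<open>0 < v k\<close> by simp
  have "log2dagger (v i / v j) = max 0 (a i - a j)" if "i \<in> {m..k}" "j \<in> {1..k}" for i j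
  proof -
    have "v i \<le> v m" "v k \<le> v j"
      using that antitone \<open>1 \<le> m\<close> by auto
    then show ?thesis
      unfolding a_def using that pos \<open>1 \<le> m\<close> \<open>v m < 2 * v k\<close>
      by (intro log2dagger_eq_max_log_diff) auto
  qed
  then have "(\<Sum>i=m..k. \<Sum>j=1..k. real m / (real j * (real j + 1)) * log2dagger (v i / v j))
      = real m * (\<Sum>i=m..k. \<Sum>j=1..k. max 0 (a i - a j) / (real j * (real j + 1)))"
    by (simp add: sum_distrib_left)
  also have "\<dots> \<le> real m * (a m - a k)"
    using antitone pos unfolding a_def
    by (intro mult_left_mono antitone_weighted_gap_sum_le \<open>1 \<le> m\<close> \<open>m \<le> k\<close>) auto
  also have "\<dots> \<le> real m"
  proof -
    have "a m - a k = log 2 (v m / v k)"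
      unfolding a_def using pos[of m] pos[of k] \<open>1 \<le> m\<close> \<open>m \<le> k\<close> by (simp add: log_divide)
    also have "\<dots> < 1"
      using pos \<open>1 \<le> m\<close> \<open>m \<le> k\<close> \<open>v m < 2 * v k\<close>
      by (subst log_less_one_cancel_iff) (auto simp: divide_less_eq)
    finally show ?thesis
      by (simp add: mult_left_le)
  qed
  finally show ?thesis .
qed

theorem mainTheorem19:
  fixes v :: "nat \<Rightarrow> real" and m n k :: nat
  assumes "1 \<le> m" and "m < n"
    and "\<And>i j. 1 \<le> i \<Longrightarrow> i \<le> j \<Longrightarrow> j \<le> n \<Longrightarrow> v j \<le> v i"
    and "v m > 0"
    and "k = Max {i \<in> {1..n}. v i > v m / 2}"
  shows "(\<Sum>i=m..k. (\<Sum>j=1..k. real m / (real j * (real j + 1)) * log2dagger (v i / v j)))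
           \<le> real m"
proof -
  let ?S = "{i \<in> {1..n}. v i > v m / 2}"
  have "finite ?S" and "m \<in> ?S"
    using assms(1,2,4) by auto
  then have "k \<in> ?S" and "m \<le> k"
    unfolding assms(5) using Max_in Max_ge by blast+
  then show ?thesis
    using assms(1,3,4)
    by (intro weighted_log2dagger_sum_le) auto
qed

end
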